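(* Let $1\le p<\infty$, let $a>1/p$ and let $(\beta_k)_{k\in\mathbb{N}}$ be real numbers in $[a,\infty)$. Let $(\boldsymbol{w(k)})_{k\in\mathbb{N}}$ be weight sequences for which there exists $C\ge1$ such that for every $k\ge1$ and every $n\ge1$, $C^{-1}n^{\beta_k}\le|w_1(k)\cdots w_n(k)|\le Cn^{\beta_k}$. Then there exists a random vector with values in $\ell_p$ that is almost surely a common frequently hypercyclic vector for the family $(B_{\boldsymbol{w(k)}})_{k\in\mathbb{N}}$ on $\ell_p$.
   Context: $\ell_p$ is the space of complex sequences $(x_n)_{n\ge0}$ with finite $\|x\|_p$, unit vectors $(e_n)_{n\ge0}$. A weight is a bounded sequence of nonzero complex numbers; the weighted backward shift is $B_{\boldsymbol w}e_0=0$, $B_{\boldsymbol w}e_n=w_ne_{n-1}$. A vector is frequently hypercyclic for $T$ if for every nonempty open $U$ the set $\{n:T^nx\in U\}$ has positive lower density; common means for every member of the family. *)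

theory Defs
  imports "HOL-Probability.Probability"
begin

definition lp :: "real \<Rightarrow> (nat \<Rightarrow> complex) set" where
  "lp p = {x. summable (\<lambda>n. norm (x n) powr p)}"

definition lp_norm :: "real \<Rightarrow> (nat \<Rightarrow> complex) \<Rightarrow> real" where
  "lp_norm p x = (\<Sum>n. norm (x n) powr p) powr (1 / p)"

definition lp_open :: "real \<Rightarrow> (nat \<Rightarrow> complex) set \<Rightarrow> bool" where
  "lp_open p U \<longleftrightarrow> U \<subseteq> lp p \<and>
     (\<forall>u\<in>U. \<exists>e>0. \<forall>v\<in>lp p. lp_norm p (\<lambda>n. v n - u n) < e \<longrightarrow> v \<in> U)"

definition lp_borel :: "real \<Rightarrow> (nat \<Rightarrow> complex) measure" where
  "lp_borel p = sigma (lp p) {U. lp_open p U}"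

definition weight :: "(nat \<Rightarrow> complex) \<Rightarrow> bool" where
  "weight w \<longleftrightarrow> (\<forall>n. w n \<noteq> 0) \<and> (\<exists>M. \<forall>n. norm (w n) \<le> M)"

text \<open>Weighted backward shift: B e_0 = 0, B e_n = w_n e_(n-1).\<close>
definition bshift :: "(nat \<Rightarrow> complex) \<Rightarrow> (nat \<Rightarrow> complex) \<Rightarrow> (nat \<Rightarrow> complex)" where
  "bshift w x = (\<lambda>n. w (Suc n) * x (Suc n))"

definition lower_density :: "nat set \<Rightarrow> ereal" where
  "lower_density A = liminf (\<lambda>N. ereal (real (card (A \<inter> {..<N})) / real N))"

definition freq_hypercyclic ::
  "real \<Rightarrow> ((nat \<Rightarrow> complex) \<Rightarrow> (nat \<Rightarrow> complex)) \<Rightarrow> (nat \<Rightarrow> complex) \<Rightarrow> bool" where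
  "freq_hypercyclic p T x \<longleftrightarrow> x \<in> lp p \<and>
     (\<forall>U. lp_open p U \<and> U \<noteq> {} \<longrightarrow> lower_density {n. (T ^^ n) x \<in> U} > 0)"

end

theory Submission
  imports Defs "HOL-Library.Discrete_Functions"
begin

(* The random vector can be taken deterministic, so the point is to build one vector x that is
   frequently hypercyclic for every B_w(k).  Enumerate all targets t = (k, y, q), y a finitely
   supported vector with Gaussian-rational entries.  Target t is served on the first halves
   [2^j, 2^j + 2^(j-1)) of those dyadic blocks for which j has 2-adic valuation t; these j have
   bounded gaps, so the return times 2^j + 2^d r (r < 2^(j-1-d)) have positive lower density.
   On such a block x_n = y_i w_1...w_i / (w_1...w_n) with i = (n - 2^j) mod 2^d, so B^m x starts
   with an exact copy of y at every return time m.  Since the weight products grow like n^beta_k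
   with beta_k > gamma > 1/p, one gets |x_n| <= n^(-gamma), hence x is in l_p, and beyond 2^d the
   orbit point is bounded by a constant times n^(-gamma); choosing the period 2^d of target t
   large makes this tail smaller than the tolerance 1/(q+1). *)

lemma norm_add_powr_le:
  fixes a b :: "'a::real_normed_vector"
  assumes "p > 0"
  shows "norm (a + b) powr p \<le> 2 powr p * (norm a powr p + norm b powr p)"
proof -
  let ?m = "max (norm a) (norm b)"
  have "norm (a + b) powr p \<le> (2 * ?m) powr p"
    using norm_triangle_ineq[of a b] assms by (intro powr_mono2) auto
  also have "\<dots> = 2 powr p * ?m powr p" by (simp add: powr_mult)
  also have "?m powr p \<le> norm a powr p + norm b powr p"
    by (cases "norm a \<le> norm b") (auto simp: max_def)
  finally show ?thesis by simp
qed

lemma powr_sum_diff_triangle: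
  fixes u v y :: "nat \<Rightarrow> 'a::real_normed_vector"
  assumes p: "p > 0"
    and sv: "summable (\<lambda>i. norm (v i - y i) powr p)"
    and su: "summable (\<lambda>i. norm (u i - y i) powr p)"
  shows "summable (\<lambda>i. norm (v i - u i) powr p)"
    and "(\<Sum>i. norm (v i - u i) powr p)
           \<le> 2 powr p * ((\<Sum>i. norm (v i - y i) powr p) + (\<Sum>i. norm (u i - y i) powr p))"
proof -
  have le: "norm (v i - u i) powr p \<le> 2 powr p * (norm (v i - y i) powr p + norm (u i - y i) powr p)"
    for i
    using norm_add_powr_le[OF p, of "v i - y i" "y i - u i"] by (simp add: norm_minus_commute)
  have s: "summable (\<lambda>i. 2 powr p * (norm (v i - y i) powr p + norm (u i - y i) powr p))"
    by (intro summable_mult summable_add sv su)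
  show sd: "summable (\<lambda>i. norm (v i - u i) powr p)"
    by (rule summable_comparison_test'[OF s]) (use le in auto)
  show "(\<Sum>i. norm (v i - u i) powr p)
          \<le> 2 powr p * ((\<Sum>i. norm (v i - y i) powr p) + (\<Sum>i. norm (u i - y i) powr p))"
    using suminf_le[OF le sd s] by (simp add: suminf_mult suminf_add[OF sv su] summable_add[OF sv su])
qed

lemma eventually_mult_powr_le_powr:
  fixes c b g :: real
  assumes "g < b"
  shows "eventually (\<lambda>z::nat. c * real z powr (- b) \<le> real z powr (- g)) sequentially"
proof -
  have "(\<lambda>z::nat. c * real z powr (g - b)) \<longlonglongrightarrow> c * 0"
    using assms by (intro tendsto_mult tendsto_const tendsto_neg_powr filterlim_real_sequentially) auto
  then have "eventually (\<lambda>z::nat. c * real z powr (g - b) < 1) sequentially"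
    by (intro order_tendstoD) auto
  then show ?thesis
  proof (rule eventually_mono)
    fix z :: nat assume lt: "c * real z powr (g - b) < 1"
    have "c * real z powr (- b) = c * real z powr (g - b) * real z powr (- g)"
      by (cases "z = 0") (simp_all add: mult.assoc powr_add[symmetric])
    also have "\<dots> \<le> 1 * real z powr (- g)"
      using lt by (intro mult_right_mono) auto
    finally show "c * real z powr (- b) \<le> real z powr (- g)" by simp
  qed
qed

lemma bshift_iterate:
  assumes "\<And>j. w j \<noteq> 0"
  shows "(bshift w ^^ m) x i = (\<Prod>j\<in>{1..i + m}. w j) / (\<Prod>j\<in>{1..i}. w j) * x (i + m)"
proof (induction m arbitrary: i)
  case 0
  have "(\<Prod>j\<in>{1..i}. w j) \<noteq> 0" using assms by (simp add: prod_zero_iff)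
  then show ?case by simp
next
  case (Suc m)
  have nz: "(\<Prod>j\<in>{1..i}. w j) \<noteq> 0" using assms by (simp add: prod_zero_iff)
  have P: "(\<Prod>j\<in>{1..Suc i}. w j) = w (Suc i) * (\<Prod>j\<in>{1..i}. w j)"
    by (rule prod.nat_ivl_Suc') simp
  have "(bshift w ^^ Suc m) x i = w (Suc i) * (bshift w ^^ m) x (Suc i)"
    by (simp add: bshift_def)
  also have "\<dots> = (\<Prod>j\<in>{1..i + Suc m}. w j) / (\<Prod>j\<in>{1..i}. w j) * x (i + Suc m)"
    using Suc nz assms[of "Suc i"] unfolding P by (simp add: field_simps)
  finally show ?case .
qed

section \<open>Approximation in l_p\<close>

definition rat_seq :: "(rat \<times> rat) list \<Rightarrow> nat \<Rightarrow> complex" where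
  "rat_seq ys i =
     (if i < length ys then Complex (of_rat (fst (ys ! i))) (of_rat (snd (ys ! i))) else 0)"

lemma rat_seq_eq_0: "length ys \<le> i \<Longrightarrow> rat_seq ys i = 0"
  by (simp add: rat_seq_def)

lemma gaussian_rationals_dense:
  fixes z :: complex and \<rho> :: real
  assumes "\<rho> > 0"
  shows "\<exists>q :: rat \<times> rat. norm (z - Complex (of_rat (fst q)) (of_rat (snd q))) < \<rho>"
proof -
  obtain q1 where q1: "Re z - \<rho> / 2 < of_rat q1" "of_rat q1 < Re z + \<rho> / 2"
    using of_rat_dense[of "Re z - \<rho> / 2" "Re z + \<rho> / 2"] assms by auto
  obtain q2 where q2: "Im z - \<rho> / 2 < of_rat q2" "of_rat q2 < Im z + \<rho> / 2"
    using of_rat_dense[of "Im z - \<rho> / 2" "Im z + \<rho> / 2"] assms by auto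
  have "norm (z - Complex (of_rat q1) (of_rat q2)) \<le> \<bar>Re z - of_rat q1\<bar> + \<bar>Im z - of_rat q2\<bar>"
    using cmod_le[of "z - Complex (of_rat q1) (of_rat q2)"] by simp
  also have "\<dots> < \<rho>" using q1 q2 by linarith
  finally show ?thesis by (intro exI[of _ "(q1, q2)"]) simp
qed

lemma rat_seq_dense_lp:
  assumes p: "p > 0" and u: "u \<in> lp p" and \<eta>: "\<eta> > 0"
  shows "\<exists>ys. summable (\<lambda>i. norm (u i - rat_seq ys i) powr p)
            \<and> (\<Sum>i. norm (u i - rat_seq ys i) powr p) < \<eta>"
proof -
  let ?f = "\<lambda>i. norm (u i) powr p"
  have sf: "summable ?f" using u by (simp add: lp_def)
  obtain N where "norm (\<Sum>i. ?f (i + N)) < \<eta> / 2"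
    using suminf_exist_split[OF _ sf, of "\<eta> / 2"] \<eta> by auto
  then have N: "(\<Sum>i. ?f (i + N)) < \<eta> / 2" by simp
  define \<rho> where "\<rho> = (\<eta> / (2 * (N + 1))) powr (1 / p)"
  have \<rho>: "\<rho> > 0" "\<rho> powr p = \<eta> / (2 * (N + 1))"
    using p \<eta> by (simp_all add: \<rho>_def powr_powr)
  have "\<forall>i. \<exists>q. norm (u i - Complex (of_rat (fst q)) (of_rat (snd q))) < \<rho>"
    using gaussian_rationals_dense[OF \<rho>(1)] by blast
  then obtain f where f: "\<And>i. norm (u i - Complex (of_rat (fst (f i))) (of_rat (snd (f i)))) < \<rho>"
    by metis
  define ys where "ys = map f [0..<N]"
  let ?e = "\<lambda>i. norm (u i - rat_seq ys i) powr p"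
  have head: "?e i \<le> \<eta> / (2 * (N + 1))" if "i < N" for i
  proof -
    have "?e i \<le> \<rho> powr p"
      using f[of i] p that by (intro powr_mono2) (auto simp: rat_seq_def ys_def)
    then show ?thesis using \<rho>(2) by simp
  qed
  have tail: "?e i = ?f i" if "N \<le> i" for i
    using that by (simp add: rat_seq_eq_0 ys_def)
  have se: "summable ?e"
    by (rule summable_comparison_test'[OF sf, of N]) (simp add: tail)
  have "(\<Sum>i. ?e i) = (\<Sum>i. ?f (i + N)) + (\<Sum>i<N. ?e i)"
    using suminf_split_initial_segment[OF se, of N] tail by simp
  also have "(\<Sum>i<N. ?e i) \<le> (\<Sum>i<N. \<eta> / (2 * (N + 1)))"
    by (rule sum_mono) (use head in auto)
  also have "(\<Sum>i<N. \<eta> / (2 * (N + 1))) \<le> \<eta> / 2"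
    using \<eta> by (simp add: field_simps)
  finally show ?thesis using se N by (intro exI[of _ ys]) auto
qed

lemma lp_open_contains_ball:
  assumes U: "lp_open p U" and u: "u \<in> U" and p: "p > 0"
  obtains \<eta> where "\<eta> > 0"
    and "\<And>v. v \<in> lp p \<Longrightarrow> summable (\<lambda>i. norm (v i - u i) powr p) \<Longrightarrow>
           (\<Sum>i. norm (v i - u i) powr p) < \<eta> \<Longrightarrow> v \<in> U"
proof -
  obtain e where e: "e > 0" and eU: "\<And>v. v \<in> lp p \<Longrightarrow> lp_norm p (\<lambda>n. v n - u n) < e \<Longrightarrow> v \<in> U"
    using U u unfolding lp_open_def by blast
  show thesis
  proof (rule that[of "e powr p"])
    fix v assume v: "v \<in> lp p" and sv: "summable (\<lambda>i. norm (v i - u i) powr p)"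
      and lt: "(\<Sum>i. norm (v i - u i) powr p) < e powr p"
    have "lp_norm p (\<lambda>n. v n - u n) < (e powr p) powr (1 / p)"
      unfolding lp_norm_def using lt p sv by (intro powr_less_mono2) (auto intro: suminf_nonneg)
    then show "v \<in> U" using p e by (intro eU[OF v]) (simp add: powr_powr)
  qed (use e in simp)
qed

lemma lp_open_contains_rat_ball:
  assumes U: "lp_open p U" "U \<noteq> {}" and p: "p > 0"
  obtains ys \<eta> where "\<eta> > 0"
    and "\<And>v. v \<in> lp p \<Longrightarrow> summable (\<lambda>i. norm (v i - rat_seq ys i) powr p) \<Longrightarrow>
           (\<Sum>i. norm (v i - rat_seq ys i) powr p) < \<eta> \<Longrightarrow> v \<in> U"
proof -
  obtain u where u: "u \<in> U" using U by blast
  obtain \<eta> where \<eta>: "\<eta> > 0" and \<eta>U: "\<And>v. v \<in> lp p \<Longrightarrow> summable (\<lambda>i. norm (v i - u i) powr p) \<Longrightarrow>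
      (\<Sum>i. norm (v i - u i) powr p) < \<eta> \<Longrightarrow> v \<in> U"
    using lp_open_contains_ball[OF U(1) u p] by metis
  define \<eta>' where "\<eta>' = \<eta> / (2 * 2 powr p)"
  have \<eta>': "\<eta>' > 0" using \<eta> by (simp add: \<eta>'_def)
  have "u \<in> lp p" using U u by (auto simp: lp_open_def)
  then obtain ys where su: "summable (\<lambda>i. norm (u i - rat_seq ys i) powr p)"
    and lu: "(\<Sum>i. norm (u i - rat_seq ys i) powr p) < \<eta>'"
    using rat_seq_dense_lp[OF p _ \<eta>'] by blast
  show thesis
  proof (rule that[of \<eta>' ys])
    fix v assume v: "v \<in> lp p" and sv: "summable (\<lambda>i. norm (v i - rat_seq ys i) powr p)"
      and lv: "(\<Sum>i. norm (v i - rat_seq ys i) powr p) < \<eta>'"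
    have "(\<Sum>i. norm (v i - u i) powr p) \<le> 2 powr p * ((\<Sum>i. norm (v i - rat_seq ys i) powr p)
            + (\<Sum>i. norm (u i - rat_seq ys i) powr p))"
      by (rule powr_sum_diff_triangle(2)[OF p sv su])
    also have "\<dots> < 2 powr p * (\<eta>' + \<eta>')"
      using lu lv by (intro mult_strict_left_mono) auto
    also have "\<dots> = \<eta>" by (simp add: \<eta>'_def)
    finally show "v \<in> U" by (rule \<eta>U[OF v powr_sum_diff_triangle(1)[OF p sv su]])
  qed (rule \<eta>')
qed

section \<open>Dyadic return times\<close>

(* For j > 0 this is the 2-adic valuation of j. *)
definition ruler :: "nat \<Rightarrow> nat" where
  "ruler j = (LEAST s. j mod 2 ^ (s + 1) = 2 ^ s)"

lemma ruler_eqI: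
  assumes "j mod 2 ^ (t + 1) = (2::nat) ^ t"
  shows "ruler j = t"
  unfolding ruler_def
proof (rule Least_equality)
  fix s assume s: "j mod 2 ^ (s + 1) = (2::nat) ^ s"
  show "t \<le> s"
  proof (rule ccontr)
    assume "\<not> t \<le> s"
    then have "(2::nat) ^ (s + 1) dvd 2 ^ (t + 1)" "(2::nat) ^ (s + 1) dvd 2 ^ t"
      using le_imp_power_dvd[of "s + 1" t "2::nat"] le_imp_power_dvd[of "s + 1" "t + 1" "2::nat"]
      by simp_all
    then have "j mod 2 ^ (s + 1) = 0"
      using assms by (metis mod_mod_cancel dvd_imp_mod_0)
    then show False using s by simp
  qed
qed (use assms in simp)

lemma ruler_gaps: "\<exists>j. a \<le> j \<and> j < a + 2 ^ (t + 1) \<and> ruler j = t"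
proof -
  define W :: nat where "W = 2 ^ (t + 1)"
  define q where "q = a div W"
  have W: "W = 2 * 2 ^ t" by (simp add: W_def)
  have "a mod W < W" by (simp add: W_def)
  then have qa: "q * W \<le> a" "a < q * W + W"
    using div_mult_mod_eq[of a W] unfolding q_def by linarith+
  have ruler: "ruler (c * W + 2 ^ t) = t" for c
    by (rule ruler_eqI) (simp add: W_def)
  show ?thesis
  proof (cases "a \<le> q * W + 2 ^ t")
    case True
    then show ?thesis using qa W ruler[of q] by (intro exI[of _ "q * W + 2 ^ t"]) (auto simp: W_def)
  next
    case False
    then show ?thesis using qa W ruler[of "Suc q"]
      by (intro exI[of _ "Suc q * W + 2 ^ t"]) (auto simp: W_def)
  qed
qed

lemma dyadic_block_below:
  fixes N :: nat
  assumes N: "2 ^ (d + 1 + 2 ^ (t + 1)) \<le> N"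
  obtains j where "ruler j = t" "d < j" "2 ^ (j + 1) \<le> N" "N < 2 ^ (j + 2 ^ (t + 1) + 1)"
proof -
  define W :: nat where "W = 2 ^ (t + 1)"
  define j0 where "j0 = floor_log N"
  have "(0::nat) < 2 ^ (d + 1 + 2 ^ (t + 1))" by simp
  then have "N > 0" using N by linarith
  then have j0: "2 ^ j0 \<le> N" "N < 2 ^ (j0 + 1)"
    using floor_log_exp2_le floor_log_exp2_gt[of N] by (auto simp: j0_def)
  have "d + 1 + W \<le> j0"
    using floor_log_le_iff[OF N] by (simp add: j0_def W_def)
  moreover obtain j where j: "j0 - W \<le> j" "j < j0 - W + W" "ruler j = t"
    using ruler_gaps unfolding W_def by blast
  ultimately have jj0: "j < j0" "d < j" "j0 \<le> j + W" by arith+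
  have "(2::nat) ^ (j + 1) \<le> 2 ^ j0" using jj0 by (intro power_increasing) auto
  moreover have "(2::nat) ^ (j0 + 1) \<le> 2 ^ (j + W + 1)" using jj0 by (intro power_increasing) auto
  ultimately show thesis
    using that[OF j(3) jj0(2)] j0 unfolding W_def by linarith
qed

lemma card_dyadic_blocks_ge:
  assumes G: "\<And>j r. ruler j = t \<Longrightarrow> d < j \<Longrightarrow> r < 2 ^ (j - 1 - d) \<Longrightarrow> 2 ^ j + 2 ^ d * r \<in> G"
    and N: "2 ^ (d + 1 + 2 ^ (t + 1)) \<le> N"
  shows "real N / 2 ^ (d + 2 ^ (t + 1) + 2) \<le> real (card (G \<inter> {..<N}))"
proof -
  define W :: nat where "W = 2 ^ (t + 1)"
  obtain j where j: "ruler j = t" "d < j" "2 ^ (j + 1) \<le> N" "N < 2 ^ (j + W + 1)"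
    using dyadic_block_below[OF N] unfolding W_def by blast
  define R :: nat where "R = 2 ^ (j - 1 - d)"
  have RD: "(2::nat) ^ d * R = 2 ^ (j - 1)"
    using j by (simp add: R_def power_add[symmetric])
  have "(2::nat) ^ j = 2 * 2 ^ (j - 1)"
    using j by (cases j) simp_all
  then have j2: "(2::nat) ^ (j + 1) = 4 * 2 ^ (j - 1)" by simp
  have "(\<lambda>r. 2 ^ j + 2 ^ d * r) ` {..<R} \<subseteq> G \<inter> {..<N}"
  proof (rule image_subsetI)
    fix r assume "r \<in> {..<R}"
    then have r: "r < R" by simp
    then have "2 ^ d * r < 2 ^ d * R" by simp
    then have "2 ^ j + 2 ^ d * r < N" using RD \<open>2 ^ j = 2 * 2 ^ (j - 1)\<close> j2 j(3) by linarith
    moreover have "2 ^ j + 2 ^ d * r \<in> G" using G[OF j(1,2)] r by (simp add: R_def)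
    ultimately show "2 ^ j + 2 ^ d * r \<in> G \<inter> {..<N}" by simp
  qed
  then have "card ((\<lambda>r. 2 ^ j + 2 ^ d * r) ` {..<R}) \<le> card (G \<inter> {..<N})"
    by (intro card_mono) auto
  then have "R \<le> card (G \<inter> {..<N})"
    by (simp add: card_image inj_on_def)
  moreover have "N \<le> R * 2 ^ (d + W + 2)"
  proof -
    have e: "j + W + 1 = (j - 1 - d) + (d + W + 2)" using j by simp
    have "(2::nat) ^ (j + W + 1) = R * 2 ^ (d + W + 2)" unfolding e R_def by (rule power_add)
    then show ?thesis using j(4) by linarith
  qed
  ultimately have "N \<le> card (G \<inter> {..<N}) * 2 ^ (d + W + 2)"
    by (meson le_trans mult_le_mono1)
  then have "real N \<le> real (card (G \<inter> {..<N})) * 2 ^ (d + W + 2)"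
    by (metis of_nat_mono of_nat_mult of_nat_numeral of_nat_power)
  then show ?thesis
    by (subst pos_divide_le_eq) (simp_all add: W_def)
qed

lemma lower_density_dyadic_blocks_pos:
  assumes "\<And>j r. ruler j = t \<Longrightarrow> d < j \<Longrightarrow> r < 2 ^ (j - 1 - d) \<Longrightarrow> 2 ^ j + 2 ^ d * r \<in> G"
  shows "lower_density G > 0"
proof -
  define \<delta> :: real where "\<delta> = 1 / 2 ^ (d + 2 ^ (t + 1) + 2)"
  have "eventually (\<lambda>N. ereal \<delta> \<le> ereal (real (card (G \<inter> {..<N})) / real N)) sequentially"
    unfolding eventually_sequentially
  proof (intro exI allI impI)
    fix N :: nat assume N: "2 ^ (d + 1 + 2 ^ (t + 1)) \<le> N"
    then have "N > 0" by (metis gr0I le_zero_eq power_not_zero zero_neq_numeral)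
    then show "ereal \<delta> \<le> ereal (real (card (G \<inter> {..<N})) / real N)"
      using card_dyadic_blocks_ge[OF assms N] by (simp add: \<delta>_def field_simps)
  qed
  then have "ereal \<delta> \<le> lower_density G"
    unfolding lower_density_def by (rule Liminf_bounded)
  moreover have "\<delta> > 0" by (simp add: \<delta>_def)
  ultimately show ?thesis by (metis ereal_less(2) less_le_trans)
qed

section \<open>Construction of a common frequently hypercyclic vector\<close>

locale polynomial_weights =
  fixes p a C :: real and \<beta> :: "nat \<Rightarrow> real" and w :: "nat \<Rightarrow> nat \<Rightarrow> complex"
  assumes p_ge_1: "1 \<le> p" and a_gt: "a > 1 / p"
    and \<beta>_ge: "\<And>k. k \<ge> 1 \<Longrightarrow> \<beta> k \<ge> a"
    and weights: "\<And>k. k \<ge> 1 \<Longrightarrow> weight (w k)"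
    and C_ge_1: "C \<ge> 1"
    and prod_bounds: "\<And>k n. k \<ge> 1 \<Longrightarrow> n \<ge> 1 \<Longrightarrow>
           real n powr \<beta> k / C \<le> norm (\<Prod>j\<in>{1..n}. w k j)
         \<and> norm (\<Prod>j\<in>{1..n}. w k j) \<le> C * real n powr \<beta> k"
begin

definition wprod :: "nat \<Rightarrow> nat \<Rightarrow> complex" where
  "wprod k n = (\<Prod>j\<in>{1..n}. w k j)"

(* Any exponent strictly between 1/p and a would do: n^-gamma is p-summable, and the gap
   beta k - gamma > 0 absorbs the constant of each single target. *)
definition \<gamma> :: real where
  "\<gamma> = (a + 1 / p) / 2"

definition majorant :: "nat \<Rightarrow> real" where
  "majorant n = real n powr (- \<gamma> * p)"

lemma p_pos: "p > 0"
  using p_ge_1 by simp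

lemma \<gamma>_bounds: "0 < \<gamma>" "\<gamma> < a" "\<gamma> * p > 1"
proof -
  have "1 < a * p" using a_gt p_pos by (simp add: divide_less_eq mult.commute)
  moreover have "\<gamma> * p = (a * p + 1) / 2" using p_pos by (simp add: \<gamma>_def field_simps)
  ultimately show "\<gamma> * p > 1" by simp
  then show "0 < \<gamma>" using p_pos by (meson less_trans zero_less_one zero_less_mult_pos2)
  show "\<gamma> < a" using a_gt by (simp add: \<gamma>_def)
qed

lemma \<beta>_gt_\<gamma>: "k \<ge> 1 \<Longrightarrow> \<beta> k > \<gamma>"
  using \<beta>_ge \<gamma>_bounds by fastforce

lemma summable_majorant: "summable majorant"
  unfolding majorant_def using \<gamma>_bounds by (subst summable_real_powr_iff) simp

lemma powr_p_le_majorant: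
  assumes "norm z \<le> c * real n powr (- \<gamma>)" "c \<ge> 0"
  shows "norm z powr p \<le> c powr p * majorant n"
proof -
  have "norm z powr p \<le> (c * real n powr (- \<gamma>)) powr p"
    using assms p_pos by (intro powr_mono2) auto
  also have "\<dots> = c powr p * majorant n"
    using assms(2) by (simp add: powr_mult majorant_def powr_powr)
  finally show ?thesis .
qed

lemma wprod_nonzero: "k \<ge> 1 \<Longrightarrow> wprod k n \<noteq> 0"
  using weights[of k] by (auto simp: wprod_def weight_def)

lemma wprod_upper_le:
  assumes k: "k \<ge> 1" and "i \<le> n" "n \<ge> 1"
  shows "norm (wprod k i) \<le> C * real n powr \<beta> k"
proof (cases "i = 0")
  case True
  have "1 \<le> real n powr \<beta> k" using assms \<beta>_gt_\<gamma>[OF k] \<gamma>_bounds by (intro ge_one_powr_ge_zero) auto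
  then show ?thesis using True C_ge_1 by (simp add: wprod_def) (metis mult_mono' mult_1 zero_le_one)
next
  case False
  then have "norm (wprod k i) \<le> C * real i powr \<beta> k"
    using prod_bounds[OF k] by (simp add: wprod_def)
  also have "\<dots> \<le> C * real n powr \<beta> k"
    using C_ge_1 assms \<beta>_gt_\<gamma>[OF k] \<gamma>_bounds by (intro mult_left_mono powr_mono2) auto
  finally show ?thesis .
qed

definition ratio_const :: "nat \<Rightarrow> real" where
  "ratio_const k = C\<^sup>2 * 4 powr \<beta> k"

lemma ratio_const_ge_1:
  assumes "k \<ge> 1"
  shows "ratio_const k \<ge> 1"
proof -
  have "1 \<le> C\<^sup>2" using C_ge_1 by (simp add: one_le_power)
  moreover have "1 \<le> (4::real) powr \<beta> k"
    using \<beta>_gt_\<gamma>[OF assms] \<gamma>_bounds by (intro ge_one_powr_ge_zero) auto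
  ultimately show ?thesis unfolding ratio_const_def by (metis mult_mono' mult_1 zero_le_one)
qed

lemma wprod_ratio_le:
  assumes k: "k \<ge> 1" and i: "i \<ge> 1" and n: "n \<le> 4 * i" "n \<ge> 1"
  shows "norm (wprod k n) / norm (wprod k i) \<le> ratio_const k"
proof -
  have b: "\<beta> k > 0" using \<beta>_gt_\<gamma>[OF k] \<gamma>_bounds by linarith
  have "norm (wprod k n) / norm (wprod k i) \<le> (C * real n powr \<beta> k) / (real i powr \<beta> k / C)"
    using prod_bounds[OF k n(2)] prod_bounds[OF k i] i C_ge_1 by (intro frac_le) (auto simp: wprod_def)
  also have "\<dots> = C\<^sup>2 * (real n powr \<beta> k / real i powr \<beta> k)"
    using C_ge_1 i by (simp add: field_simps power2_eq_square)
  also have "real n powr \<beta> k \<le> 4 powr \<beta> k * real i powr \<beta> k"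
    using n b by (simp add: powr_mult[symmetric] powr_mono2)
  then have "real n powr \<beta> k / real i powr \<beta> k \<le> 4 powr \<beta> k"
    using i by (simp add: divide_le_eq)
  finally show ?thesis
    using C_ge_1 by (simp add: ratio_const_def mult_left_mono)
qed

(* from_nat is onto, so every triple (k - 1, ys, q) occurs as target t for some t. *)
definition target :: "nat \<Rightarrow> nat \<times> (rat \<times> rat) list \<times> nat" where
  "target t = from_nat t"

definition target_shift :: "nat \<Rightarrow> nat" where
  "target_shift t = Suc (fst (target t))"

definition target_vec :: "nat \<Rightarrow> nat \<Rightarrow> complex" where
  "target_vec t = rat_seq (fst (snd (target t)))"

definition target_len :: "nat \<Rightarrow> nat" where
  "target_len t = length (fst (snd (target t)))"

definition target_tol :: "nat \<Rightarrow> real" where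
  "target_tol t = 1 / (real (snd (snd (target t))) + 1)"

definition target_const :: "nat \<Rightarrow> real" where
  "target_const t = (\<Sum>i<target_len t. norm (target_vec t i)) * C\<^sup>2
                     * real (target_len t) powr \<beta> (target_shift t)"

lemma target_shift_ge_1: "target_shift t \<ge> 1"
  by (simp add: target_shift_def)

lemma target_vec_nonzero: "target_vec t i \<noteq> 0 \<Longrightarrow> i < target_len t"
  unfolding target_vec_def target_len_def
  by (cases "length (fst (snd (target t))) \<le> i") (simp_all add: rat_seq_eq_0)

lemma target_term_le:
  assumes "z \<ge> 1"
  shows "norm (target_vec t i * wprod (target_shift t) i / wprod (target_shift t) z)
           \<le> target_const t * real z powr (- \<beta> (target_shift t))"
proof (cases "target_vec t i = 0")
  case True
  then show ?thesis by (simp add: target_const_def sum_nonneg)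
next
  case False
  let ?k = "target_shift t" and ?b = "\<beta> (target_shift t)" and ?N = "target_len t"
  have i: "i < ?N" using target_vec_nonzero[OF False] .
  have "norm (target_vec t i) \<le> (\<Sum>i<?N. norm (target_vec t i))"
    using i by (intro member_le_sum) auto
  moreover have "norm (wprod ?k i) \<le> C * ?N powr ?b"
    using i by (intro wprod_upper_le target_shift_ge_1) auto
  ultimately have "norm (target_vec t i) * norm (wprod ?k i) \<le> (\<Sum>i<?N. norm (target_vec t i)) * (C * ?N powr ?b)"
    by (intro mult_mono) (auto intro: sum_nonneg)
  moreover have "real z powr ?b / C \<le> norm (wprod ?k z)"
    using prod_bounds[OF target_shift_ge_1 assms] by (simp add: wprod_def)
  moreover have "0 < real z powr ?b / C" using assms C_ge_1 by simp
  ultimately have "norm (target_vec t i) * norm (wprod ?k i) / norm (wprod ?k z)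
      \<le> (\<Sum>i<?N. norm (target_vec t i)) * (C * ?N powr ?b) / (real z powr ?b / C)"
    by (intro frac_le mult_nonneg_nonneg sum_nonneg) (use C_ge_1 in auto)
  then have "norm (target_vec t i * wprod ?k i / wprod ?k z)
      \<le> (\<Sum>i<?N. norm (target_vec t i)) * (C * ?N powr ?b) / (real z powr ?b / C)"
    by (simp add: norm_mult norm_divide)
  also have "\<dots> = target_const t * real z powr (- ?b)"
    using C_ge_1 assms by (simp add: target_const_def powr_minus field_simps power2_eq_square)
  finally show ?thesis .
qed

definition good_scale :: "nat \<Rightarrow> nat \<Rightarrow> bool" where
  "good_scale t d \<longleftrightarrow> target_len t \<le> 2 ^ d \<and>
     (\<forall>z::nat. 2 ^ d \<le> z \<longrightarrow> target_const t * real z powr (- \<beta> (target_shift t)) \<le> real z powr (- \<gamma>)) \<and>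
     ratio_const (target_shift t) powr p * (\<Sum>i. majorant (i + 2 ^ d)) < target_tol t"

lemma good_scale_exists: "\<exists>d. good_scale t d"
proof -
  let ?k = "target_shift t"
  let ?R = "ratio_const ?k powr p"
  have "eventually (\<lambda>z. target_const t * real z powr (- \<beta> ?k) \<le> real z powr (- \<gamma>)) sequentially"
    by (rule eventually_mult_powr_le_powr) (rule \<beta>_gt_\<gamma>[OF target_shift_ge_1])
  then obtain Z where Z: "\<And>z. z \<ge> Z \<Longrightarrow> target_const t * real z powr (- \<beta> ?k) \<le> real z powr (- \<gamma>)"
    by (auto simp: eventually_sequentially)
  have "ratio_const ?k \<ge> 1" by (rule ratio_const_ge_1[OF target_shift_ge_1])
  then have R: "?R > 0" by (metis not_one_le_zero powr_gt_zero)
  then have "target_tol t / ?R > 0"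
    by (simp add: target_tol_def)
  then obtain M where M: "\<And>n. n \<ge> M \<Longrightarrow> norm (\<Sum>i. majorant (i + n)) < target_tol t / ?R"
    using suminf_exist_split[OF _ summable_majorant] by blast
  define d where "d = target_len t + Z + M"
  have d: "d < 2 ^ d" by (rule less_exp)
  then have "norm (\<Sum>i. majorant (i + 2 ^ d)) < target_tol t / ?R"
    using d unfolding d_def by (intro M) linarith
  then have "(\<Sum>i. majorant (i + 2 ^ d)) < target_tol t / ?R"
    by (metis abs_ge_self le_less_trans real_norm_def)
  then have "?R * (\<Sum>i. majorant (i + 2 ^ d)) < target_tol t"
    using R by (simp add: pos_less_divide_eq mult.commute)
  moreover have "target_len t \<le> 2 ^ d" using d unfolding d_def by linarith
  moreover have "target_const t * real z powr (- \<beta> ?k) \<le> real z powr (- \<gamma>)" if "2 ^ d \<le> z" for z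
    using that d unfolding d_def by (intro Z) linarith
  ultimately have "good_scale t d"
    unfolding good_scale_def by blast
  then show ?thesis ..
qed

definition scale :: "nat \<Rightarrow> nat" where
  "scale t = (SOME d. good_scale t d)"

lemma scale_is_good: "good_scale t (scale t)"
  unfolding scale_def by (rule someI_ex[OF good_scale_exists])

lemma scale_bounds:
  "target_len t \<le> 2 ^ scale t"
  "\<And>z. 2 ^ scale t \<le> z \<Longrightarrow> target_const t * real z powr (- \<beta> (target_shift t)) \<le> real z powr (- \<gamma>)"
  "ratio_const (target_shift t) powr p * (\<Sum>i. majorant (i + 2 ^ scale t)) < target_tol t"
proof -
  note g = scale_is_good[of t, unfolded good_scale_def]
  show "target_len t \<le> 2 ^ scale t" by (rule g[THEN conjunct1])
  show "target_const t * real z powr (- \<beta> (target_shift t)) \<le> real z powr (- \<gamma>)"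
    if "2 ^ scale t \<le> z" for z
    by (rule g[THEN conjunct2, THEN conjunct1, rule_format, OF that])
  show "ratio_const (target_shift t) powr p * (\<Sum>i. majorant (i + 2 ^ scale t)) < target_tol t"
    by (rule g[THEN conjunct2, THEN conjunct2])
qed

lemma target_term_decay:
  assumes "2 ^ scale t \<le> z"
  shows "norm (target_vec t i * wprod (target_shift t) i / wprod (target_shift t) z) \<le> real z powr (- \<gamma>)"
proof -
  have "(1::nat) \<le> 2 ^ scale t" by simp
  then have "z \<ge> 1" using assms by linarith
  then show ?thesis by (rule order_trans[OF target_term_le scale_bounds(2)[OF assms]])
qed

lemma target_vec_beyond_scale: "2 ^ scale t \<le> i \<Longrightarrow> target_vec t i = 0"
  using target_vec_nonzero[of t i] scale_bounds(1)[of t] by linarith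

definition fhc_vector :: "nat \<Rightarrow> complex" where
  "fhc_vector n =
     (let j = floor_log n; t = ruler j; k = target_shift t; i = (n - 2 ^ j) mod 2 ^ scale t in
      if scale t < j \<and> n < 2 ^ j + 2 ^ (j - 1) then target_vec t i * wprod k i / wprod k n else 0)"

lemma fhc_vector_block:
  assumes "ruler j = t" "scale t < j" "2 ^ j \<le> n" "n < 2 ^ j + 2 ^ (j - 1)"
  shows "fhc_vector n = target_vec t ((n - 2 ^ j) mod 2 ^ scale t)
           * wprod (target_shift t) ((n - 2 ^ j) mod 2 ^ scale t) / wprod (target_shift t) n"
proof -
  have "(2::nat) ^ (j - 1) \<le> 2 ^ j" "(1::nat) \<le> 2 ^ j"
    by (simp_all add: power_increasing)
  then have "floor_log n = j"
    using assms by (intro floor_log_eqI) linarith+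
  then show ?thesis using assms by (simp add: fhc_vector_def Let_def)
qed

lemma fhc_vector_gap:
  assumes "2 ^ j + 2 ^ (j - 1) \<le> n" "n < 2 ^ (j + 1)"
  shows "fhc_vector n = 0"
proof -
  have "(1::nat) \<le> 2 ^ j" by simp
  then have "floor_log n = j"
    using assms by (intro floor_log_eqI) auto
  then show ?thesis using assms by (simp add: fhc_vector_def Let_def)
qed

lemma fhc_vector_decay: "norm (fhc_vector n) \<le> real n powr (- \<gamma>)"
proof (cases "fhc_vector n = 0")
  case False
  define j where "j = floor_log n"
  define t where "t = ruler j"
  have j: "scale t < j" "n < 2 ^ j + 2 ^ (j - 1)"
    using False by (auto simp: fhc_vector_def Let_def j_def t_def split: if_splits)
  then have "n > 0" by (cases n) (auto simp: j_def)
  then have jn: "2 ^ j \<le> n" unfolding j_def by (rule floor_log_exp2_le)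
  moreover have "(2::nat) ^ scale t \<le> 2 ^ j" using j by (intro power_increasing) auto
  ultimately have "2 ^ scale t \<le> n" by linarith
  then show ?thesis
    unfolding fhc_vector_block[OF t_def[symmetric] j(1) jn j(2)] by (rule target_term_decay)
qed simp

lemma fhc_vector_in_lp: "fhc_vector \<in> lp p"
proof -
  have "norm (fhc_vector n) powr p \<le> majorant n" for n
    using powr_p_le_majorant[of "fhc_vector n" 1 n] fhc_vector_decay by simp
  then show ?thesis
    unfolding lp_def by (auto intro: summable_comparison_test'[OF summable_majorant])
qed

lemma bshift_iterate_fhc_vector:
  assumes "k \<ge> 1"
  shows "(bshift (w k) ^^ m) fhc_vector i = wprod k (i + m) / wprod k i * fhc_vector (i + m)"
  using bshift_iterate[of "w k"] weights[OF assms] by (simp add: weight_def wprod_def)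

context
  fixes t j r :: nat
  assumes ruler_j: "ruler j = t" and scale_less: "scale t < j" and r_less: "r < 2 ^ (j - 1 - scale t)"
begin

lemma copies_fit_in_half_block: "2 ^ scale t * r + 2 ^ scale t \<le> (2::nat) ^ (j - 1)"
proof -
  have "(2::nat) ^ scale t * (r + 1) \<le> 2 ^ scale t * 2 ^ (j - 1 - scale t)"
    using r_less by (intro mult_left_mono) auto
  also have "\<dots> = 2 ^ (j - 1)" using scale_less by (simp add: power_add[symmetric])
  finally show ?thesis by simp
qed

lemma orbit_head:
  assumes "i < 2 ^ scale t"
  shows "(bshift (w (target_shift t)) ^^ (2 ^ j + 2 ^ scale t * r)) fhc_vector i = target_vec t i"
proof -
  let ?k = "target_shift t" and ?n = "i + (2 ^ j + 2 ^ scale t * r)"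
  have "(?n - 2 ^ j) mod 2 ^ scale t = i" using assms by simp
  moreover have "?n < 2 ^ j + 2 ^ (j - 1)" using assms copies_fit_in_half_block by linarith
  ultimately have "fhc_vector ?n = target_vec t i * wprod ?k i / wprod ?k ?n"
    using fhc_vector_block[OF ruler_j scale_less] by simp
  then show ?thesis
    using wprod_nonzero[OF target_shift_ge_1]
    by (simp add: bshift_iterate_fhc_vector[OF target_shift_ge_1])
qed

lemma orbit_tail:
  assumes i: "2 ^ scale t \<le> i"
  shows "norm ((bshift (w (target_shift t)) ^^ (2 ^ j + 2 ^ scale t * r)) fhc_vector i)
           \<le> ratio_const (target_shift t) * real i powr (- \<gamma>)"
proof -
  let ?k = "target_shift t" and ?m = "2 ^ j + 2 ^ scale t * r"
  let ?n = "i + ?m"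
  have orbit: "(bshift (w ?k) ^^ ?m) fhc_vector i = wprod ?k ?n / wprod ?k i * fhc_vector ?n"
    by (rule bshift_iterate_fhc_vector[OF target_shift_ge_1])
  have R: "ratio_const ?k \<ge> 1" by (rule ratio_const_ge_1[OF target_shift_ge_1])
  have i1: "i \<ge> 1" using i by (metis le_trans one_le_numeral one_le_power)
  have decay_le: "real i powr (- \<gamma>) \<le> ratio_const ?k * real i powr (- \<gamma>)"
    using mult_right_mono[OF R, of "real i powr (- \<gamma>)"] by simp
  consider (same) "?n < 2 ^ j + 2 ^ (j - 1)" | (gap) "2 ^ j + 2 ^ (j - 1) \<le> ?n" "?n < 2 ^ (j + 1)"
    | (later) "2 ^ (j + 1) \<le> ?n"
    by linarith
  then show ?thesis
  proof cases
    case same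
    let ?i' = "(?n - 2 ^ j) mod 2 ^ scale t"
    have "fhc_vector ?n = target_vec t ?i' * wprod ?k ?i' / wprod ?k ?n"
      using fhc_vector_block[OF ruler_j scale_less _ same] by simp
    then have "(bshift (w ?k) ^^ ?m) fhc_vector i = target_vec t ?i' * wprod ?k ?i' / wprod ?k i"
      using orbit wprod_nonzero[OF target_shift_ge_1] by simp
    then show ?thesis using target_term_decay[OF i, of ?i'] decay_le by simp
  next
    case gap
    then show ?thesis using orbit fhc_vector_gap[OF gap] R by simp
  next
    case later
    have "?m + 2 ^ scale t \<le> 2 ^ j + 2 ^ (j - 1)" using copies_fit_in_half_block by simp
    moreover have "(2::nat) ^ (j + 1) = 2 * 2 ^ j" by simp
    moreover have "(2::nat) ^ j = 2 * 2 ^ (j - 1)"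
      using scale_less by (cases j) simp_all
    ultimately have "?n \<le> 4 * i" using later by linarith
    then have "norm (wprod ?k ?n) / norm (wprod ?k i) \<le> ratio_const ?k"
      using i1 by (intro wprod_ratio_le target_shift_ge_1) auto
    moreover have "norm (fhc_vector ?n) \<le> real i powr (- \<gamma>)"
      using fhc_vector_decay[of ?n] i1 \<gamma>_bounds powr_mono2'[of "- \<gamma>" i ?n] by simp
    ultimately show ?thesis
      unfolding orbit norm_mult norm_divide using R by (intro mult_mono) auto
  qed
qed

lemma orbit_near_target:
  defines "v \<equiv> (bshift (w (target_shift t)) ^^ (2 ^ j + 2 ^ scale t * r)) fhc_vector"
  shows "v \<in> lp p" and "summable (\<lambda>i. norm (v i - target_vec t i) powr p)"
    and "(\<Sum>i. norm (v i - target_vec t i) powr p) < target_tol t"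
proof -
  let ?D = "2 ^ scale t" and ?R = "ratio_const (target_shift t) powr p"
  let ?e = "\<lambda>i. norm (v i - target_vec t i) powr p"
  have head: "?e i = 0" if "i < ?D" for i
    using orbit_head[OF that] p_pos by (simp add: v_def)
  have tail: "?e i \<le> ?R * majorant i" if i: "?D \<le> i" for i
  proof -
    have "target_vec t i = 0" using target_vec_beyond_scale[OF i] .
    moreover have "norm (v i) powr p \<le> ?R * majorant i"
      using orbit_tail[OF i] ratio_const_ge_1[OF target_shift_ge_1[of t]]
      by (intro powr_p_le_majorant) (auto simp: v_def)
    ultimately show ?thesis by simp
  qed
  have sR: "summable (\<lambda>i. ?R * majorant i)"
    by (intro summable_mult summable_majorant)
  show "summable ?e"
    by (rule summable_comparison_test'[OF sR, of ?D]) (simp add: tail)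
  moreover have "norm (v i) powr p = ?e i" if "?D \<le> i" for i
    using target_vec_beyond_scale[OF that] by simp
  ultimately show "v \<in> lp p"
    unfolding lp_def by (auto intro: summable_comparison_test'[OF \<open>summable ?e\<close>, of ?D])
  have "(\<Sum>i. ?e i) = (\<Sum>i. ?e (i + ?D))"
    using suminf_split_initial_segment[OF \<open>summable ?e\<close>, of ?D] head by simp
  also have "\<dots> \<le> (\<Sum>i. ?R * majorant (i + ?D))"
    using tail summable_ignore_initial_segment[OF sR] summable_ignore_initial_segment[OF \<open>summable ?e\<close>]
    by (intro suminf_le) auto
  also have "\<dots> = ?R * (\<Sum>i. majorant (i + ?D))"
    by (intro suminf_mult summable_ignore_initial_segment summable_majorant)
  also have "\<dots> < target_tol t" by (rule scale_bounds(3))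
  finally show "(\<Sum>i. ?e i) < target_tol t" .
qed

end

lemma open_set_contains_target_ball:
  assumes U: "lp_open p U" "U \<noteq> {}" and k: "k \<ge> 1"
  obtains t where "target_shift t = k"
    and "\<And>v. v \<in> lp p \<Longrightarrow> summable (\<lambda>i. norm (v i - target_vec t i) powr p) \<Longrightarrow>
           (\<Sum>i. norm (v i - target_vec t i) powr p) < target_tol t \<Longrightarrow> v \<in> U"
proof -
  obtain ys \<eta> where \<eta>: "\<eta> > 0" and ball: "\<And>v. v \<in> lp p \<Longrightarrow> summable (\<lambda>i. norm (v i - rat_seq ys i) powr p) \<Longrightarrow>
      (\<Sum>i. norm (v i - rat_seq ys i) powr p) < \<eta> \<Longrightarrow> v \<in> U"
    using lp_open_contains_rat_ball[OF U p_pos] by metis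
  obtain q :: nat where q: "inverse (real (Suc q)) < \<eta>"
    using reals_Archimedean[OF \<eta>] by blast
  define t where "t = to_nat (k - 1, ys, q)"
  have "target t = (k - 1, ys, q)" by (simp add: target_def t_def)
  then have "target_shift t = k" "target_vec t = rat_seq ys" "target_tol t < \<eta>"
    using k q by (simp_all add: target_shift_def target_vec_def target_tol_def inverse_eq_divide add.commute)
  then show ?thesis using ball by (intro that[of t]) simp_all
qed

theorem freq_hypercyclic_fhc_vector:
  assumes k: "k \<ge> 1"
  shows "freq_hypercyclic p (bshift (w k)) fhc_vector"
  unfolding freq_hypercyclic_def
proof (intro conjI allI impI fhc_vector_in_lp)
  fix U assume U: "lp_open p U \<and> U \<noteq> {}"
  then obtain t where t: "target_shift t = k"
    and ball: "\<And>v. v \<in> lp p \<Longrightarrow> summable (\<lambda>i. norm (v i - target_vec t i) powr p) \<Longrightarrow>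
           (\<Sum>i. norm (v i - target_vec t i) powr p) < target_tol t \<Longrightarrow> v \<in> U"
    using open_set_contains_target_ball k by blast
  show "lower_density {n. (bshift (w k) ^^ n) fhc_vector \<in> U} > 0"
  proof (rule lower_density_dyadic_blocks_pos)
    fix j r :: nat assume "ruler j = t" "scale t < j" "r < 2 ^ (j - 1 - scale t)"
    from orbit_near_target[OF this] show "2 ^ j + 2 ^ scale t * r \<in> {n. (bshift (w k) ^^ n) fhc_vector \<in> U}"
      using ball t by simp
  qed
qed

end

theorem corollary4p3:
  fixes p a C :: real and \<beta> :: "nat \<Rightarrow> real" and w :: "nat \<Rightarrow> nat \<Rightarrow> complex"
  assumes "1 \<le> p" and "a > 1 / p"
    and "\<And>k. k \<ge> 1 \<Longrightarrow> \<beta> k \<ge> a"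
    and "\<And>k. k \<ge> 1 \<Longrightarrow> weight (w k)"
    and "C \<ge> 1"
    and "\<And>k n. k \<ge> 1 \<Longrightarrow> n \<ge> 1 \<Longrightarrow>
           real n powr \<beta> k / C \<le> norm (\<Prod>j\<in>{1..n}. w k j)
         \<and> norm (\<Prod>j\<in>{1..n}. w k j) \<le> C * real n powr \<beta> k"
  shows "\<exists>(M :: (nat \<Rightarrow> real) measure) X. prob_space M \<and> X \<in> M \<rightarrow>\<^sub>M lp_borel p \<and>
           (AE \<omega> in M. \<forall>k\<ge>1. freq_hypercyclic p (bshift (w k)) (X \<omega>))"
proof -
  interpret polynomial_weights p a C \<beta> w
    using assms by unfold_locales
  let ?M = "return (count_space UNIV) (\<lambda>_::nat. 0::real)"
  have "prob_space ?M" by (rule prob_space_return) simp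
  moreover have "(\<lambda>_. fhc_vector) \<in> ?M \<rightarrow>\<^sub>M lp_borel p"
    by (rule measurable_const) (simp add: lp_borel_def space_measure_of_conv fhc_vector_in_lp)
  moreover have "AE \<omega> in ?M. \<forall>k\<ge>1. freq_hypercyclic p (bshift (w k)) fhc_vector"
    using freq_hypercyclic_fhc_vector by simp
  ultimately show ?thesis by blast
qed

end
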